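(* Fix $d\geq 1$. Let ${\boldsymbol{\rho}}=(\rho_1,\dots,\rho_m)$ and ${\boldsymbol{\tau}}=(\tau_1,\dots,\tau_n)$ be contraction vectors (in ${\mathbb R}^d$), and assume that ${\boldsymbol{\rho}}$ is equivalent to ${\boldsymbol{\tau}}$. Then ${\mathcal D}({\boldsymbol{\rho}})\sim{\mathcal D}({\boldsymbol{\tau}})$, i.e. every set $E\in{\mathcal D}({\boldsymbol{\rho}})$ and every set $F\in{\mathcal D}({\boldsymbol{\tau}})$ are Lipschitz equivalent.
   Context: Two compact sets $E,F\subset{\mathbb R}^d$ are Lipschitz equivalent if there is a bijection $f:E\to F$ and a constant $C>0$ with $C^{-1}|x-y|\le|f(x)-f(y)|\le C|x-y|$ for all $x,y\in E$. A contraction vector is ${\boldsymbol{\rho}}=(\rho_1,\dots,\rho_m)$ with each $\rho_j\in(0,1)$ and $\sum_{j=1}^m\rho_j^d<1$. ${\mathcal D}({\boldsymbol{\rho}})$ denotes the set of all dust-like self-similar sets in ${\mathbb R}^d$ that are attractors of some iterated function system $\{\phi_1,\dots,\phi_m\}$ of contracting similarities on ${\mathbb R}^d$, $\phi_j$ having ratio $\rho_j$; dust-like means the sets $\phi_j(K)$, $j=1,\dots,m$, are pairwise disjoint, where $K$ is the attractor (the unique nonempty compact set with $K=\bigcup_j\phi_j(K)$). It is known that any two sets in ${\mathcal D}({\boldsymbol{\rho}})$ are Lipschitz equivalent, and ${\mathcal D}({\boldsymbol{\rho}})\sim{\mathcal D}({\boldsymbol{\tau}})$ means that sets of the two classes are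 Lipschitz equivalent. Let $\Sigma_m$ be the set of infinite words over $\{1,\dots,m\}$ and $\Sigma_m^*$ the set of nonempty finite words; for ${\mathbf i}\in\Sigma_m^*$, $[{\mathbf i}]$ is the set of infinite words beginning with ${\mathbf i}$. A finite set $\{{\mathbf j}_1,\dots,{\mathbf j}_n\}\subset\Sigma_m^*$ is a cut set if the cylinders $[{\mathbf j}_1],\dots,[{\mathbf j}_n]$ are pairwise disjoint with union $\Sigma_m$. For ${\mathbf i}=i_1\cdots i_k$ write ${\boldsymbol{\rho}}_{\mathbf i}=\rho_{i_1}\cdots\rho_{i_k}$. The contraction vector ${\boldsymbol{\tau}}=(\tau_1,\dots,\tau_n)$ is derived from ${\boldsymbol{\rho}}$ if there is a cut set $\{{\mathbf j}_1,\dots,{\mathbf j}_n\}$ of $\Sigma_m$ with ${\boldsymbol{\tau}}=({\boldsymbol{\rho}}_{{\mathbf j}_1},\dots,{\boldsymbol{\rho}}_{{\mathbf j}_n})$. Two contraction vectors ${\boldsymbol{\rho}},{\boldsymbol{\tau}}$ are equivalent if there is a finite sequence ${\boldsymbol{\rho}}={\boldsymbol{\rho}}_1,{\boldsymbol{\rho}}_2,\dots,{\boldsymbol{\rho}}_N={\boldsymbol{\tau}}$ of contraction vectors such that for each $1\le j<N$, ${\boldsymbol{\rho}}_{j+1}$ is derived from ${\boldsymbol{\rho}}_j$ or ${\boldsymbol{\rho}}_j$ is derived from ${\boldsymbol{\rho}}_{j+1}$. *)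

theory Defs
  imports "HOL-Analysis.Analysis"
begin

text \<open>A contraction vector in R^d: a nonempty list of ratios in (0,1) with sum of d-th powers < 1.
  Letters are 0-indexed: the alphabet of a vector rho is {0..<length rho}.\<close>
definition contraction_vector :: "nat \<Rightarrow> real list \<Rightarrow> bool" where
  "contraction_vector d rho \<longleftrightarrow> rho \<noteq> [] \<and> (\<forall>r\<in>set rho. 0 < r \<and> r < 1)
      \<and> (\<Sum>r\<leftarrow>rho. r ^ d) < 1"

definition infwords :: "nat \<Rightarrow> (nat \<Rightarrow> nat) set" where
  "infwords m = {w. \<forall>k. w k < m}"

definition finwords :: "nat \<Rightarrow> nat list set" where
  "finwords m = {i. i \<noteq> [] \<and> (\<forall>a\<in>set i. a < m)}"

definition cylinder :: "nat \<Rightarrow> nat list \<Rightarrow> (nat \<Rightarrow> nat) set" where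
  "cylinder m i = {w \<in> infwords m. \<forall>k<length i. w k = i ! k}"

definition cut_set :: "nat \<Rightarrow> nat list set \<Rightarrow> bool" where
  "cut_set m J \<longleftrightarrow> finite J \<and> J \<subseteq> finwords m
     \<and> (\<forall>i\<in>J. \<forall>j\<in>J. i \<noteq> j \<longrightarrow> cylinder m i \<inter> cylinder m j = {})
     \<and> (\<Union>j\<in>J. cylinder m j) = infwords m"

definition word_ratio :: "real list \<Rightarrow> nat list \<Rightarrow> real" where
  "word_ratio rho i = (\<Prod>a\<leftarrow>i. rho ! a)"

definition derived_from :: "real list \<Rightarrow> real list \<Rightarrow> bool" where
  "derived_from tau rho \<longleftrightarrow> (\<exists>js. distinct js \<and> cut_set (length rho) (set js)
      \<and> tau = map (word_ratio rho) js)"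

definition equiv_step :: "nat \<Rightarrow> real list \<Rightarrow> real list \<Rightarrow> bool" where
  "equiv_step d rho tau \<longleftrightarrow> contraction_vector d rho \<and> contraction_vector d tau
      \<and> (derived_from tau rho \<or> derived_from rho tau)"

definition equivalent_cv :: "nat \<Rightarrow> real list \<Rightarrow> real list \<Rightarrow> bool" where
  "equivalent_cv d rho tau \<longleftrightarrow> contraction_vector d rho \<and> (equiv_step d)\<^sup>*\<^sup>* rho tau"

text \<open>Dust-like self-similar sets with contraction vector rho in the euclidean space 'a.
  The attractor is the unique nonempty compact invariant set.\<close>
definition dustlike :: "real list \<Rightarrow> 'a::euclidean_space set set" where
  "dustlike rho = {K. \<exists>phi :: nat \<Rightarrow> 'a \<Rightarrow> 'a.
      (\<forall>j<length rho. \<forall>x y. dist (phi j x) (phi j y) = rho ! j * dist x y)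
    \<and> K \<noteq> {} \<and> compact K \<and> K = (\<Union>j<length rho. phi j ` K)
    \<and> (\<forall>i<length rho. \<forall>j<length rho. i \<noteq> j \<longrightarrow> phi i ` K \<inter> phi j ` K = {})}"

definition lipschitz_equivalent :: "'a::metric_space set \<Rightarrow> 'b::metric_space set \<Rightarrow> bool" where
  "lipschitz_equivalent E F \<longleftrightarrow> (\<exists>f C. bij_betw f E F \<and> C > 0 \<and>
     (\<forall>x\<in>E. \<forall>y\<in>E. inverse C * dist x y \<le> dist (f x) (f y) \<and> dist (f x) (f y) \<le> C * dist x y))"

end

theory Submission
  imports Defs
begin

text \<open>Every set of \<open>\<D>(\<rho>)\<close> is bi-Lipschitz equivalent, via its coding map, to the symbolic space
  of infinite words over \<open>{0..<m}\<close> with the ultrametric \<open>\<rho>\<^sub>w\<close> where \<open>w\<close> is the longest common prefix.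
  The coding argument only uses that the pieces are similar copies at positive mutual distance, so
  it applies equally to the symbolic space of \<open>\<rho>\<close> with the maps \<open>w \<mapsto> j\<^sub>t w\<close> for a cut set
  \<open>{j\<^sub>1, \<dots>, j\<^sub>n}\<close>: this is a dust-like system with ratios \<open>\<tau>\<close>, so the symbolic spaces of \<open>\<rho>\<close> and of
  a vector \<open>\<tau>\<close> derived from it are bi-Lipschitz equivalent. Composing along a chain of derivations
  gives the theorem.\<close>

definition bi_lipschitz_equiv ::
    "'x set \<Rightarrow> ('x \<Rightarrow> 'x \<Rightarrow> real) \<Rightarrow> 'y set \<Rightarrow> ('y \<Rightarrow> 'y \<Rightarrow> real) \<Rightarrow> bool" where
  "bi_lipschitz_equiv A dA B dB \<longleftrightarrow> (\<exists>f C. bij_betw f A B \<and> C > 0 \<and>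
     (\<forall>x\<in>A. \<forall>y\<in>A. inverse C * dA x y \<le> dB (f x) (f y) \<and> dB (f x) (f y) \<le> C * dA x y))"

lemma lipschitz_equivalent_iff_bi_lipschitz_equiv:
  "lipschitz_equivalent E F \<longleftrightarrow> bi_lipschitz_equiv E dist F dist"
  unfolding lipschitz_equivalent_def bi_lipschitz_equiv_def ..

lemma bi_lipschitz_equiv_refl: "bi_lipschitz_equiv A d A d"
  unfolding bi_lipschitz_equiv_def by (intro exI[of _ id] exI[of _ 1]) auto

lemma bi_lipschitz_equiv_sym:
  assumes "bi_lipschitz_equiv A dA B dB"
  shows "bi_lipschitz_equiv B dB A dA"
proof -
  obtain f C where f: "bij_betw f A B" and C: "C > 0" and
    bounds: "\<And>x y. x \<in> A \<Longrightarrow> y \<in> A \<Longrightarrow> inverse C * dA x y \<le> dB (f x) (f y) \<and> dB (f x) (f y) \<le> C * dA x y"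
    using assms unfolding bi_lipschitz_equiv_def by blast
  let ?g = "inv_into A f"
  have "inverse C * dB x y \<le> dA (?g x) (?g y) \<and> dA (?g x) (?g y) \<le> C * dB x y"
    if "x \<in> B" "y \<in> B" for x y
  proof -
    have "?g x \<in> A" "?g y \<in> A" "f (?g x) = x" "f (?g y) = y"
      using that f by (auto simp: bij_betw_def inv_into_into f_inv_into_f)
    with bounds[of "?g x" "?g y"] C show ?thesis by (simp add: field_simps)
  qed
  then show ?thesis
    unfolding bi_lipschitz_equiv_def using bij_betw_inv_into[OF f] C by blast
qed

lemma bi_lipschitz_equiv_trans:
  assumes "bi_lipschitz_equiv A dA B dB" and "bi_lipschitz_equiv B dB E dE"
  shows "bi_lipschitz_equiv A dA E dE"
proof -
  obtain f C where f: "bij_betw f A B" and C: "C > 0" and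
    f_bounds: "\<And>x y. x \<in> A \<Longrightarrow> y \<in> A \<Longrightarrow> inverse C * dA x y \<le> dB (f x) (f y) \<and> dB (f x) (f y) \<le> C * dA x y"
    using assms(1) unfolding bi_lipschitz_equiv_def by blast
  obtain g C' where g: "bij_betw g B E" and C': "C' > 0" and
    g_bounds: "\<And>x y. x \<in> B \<Longrightarrow> y \<in> B \<Longrightarrow> inverse C' * dB x y \<le> dE (g x) (g y) \<and> dE (g x) (g y) \<le> C' * dB x y"
    using assms(2) unfolding bi_lipschitz_equiv_def by blast
  have "inverse (C * C') * dA x y \<le> dE (g (f x)) (g (f y)) \<and> dE (g (f x)) (g (f y)) \<le> (C * C') * dA x y"
    if "x \<in> A" "y \<in> A" for x y
  proof -
    have "f x \<in> B" "f y \<in> B" using that f by (auto simp: bij_betw_def)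
    note fb = f_bounds[OF that] and gb = g_bounds[OF this]
    have "inverse (C * C') * dA x y = inverse C' * (inverse C * dA x y)" by simp
    also have "\<dots> \<le> inverse C' * dB (f x) (f y)" using fb C' by (simp add: mult_left_mono)
    finally have lower: "inverse (C * C') * dA x y \<le> dE (g (f x)) (g (f y))" using gb by linarith
    have "C' * dB (f x) (f y) \<le> C' * (C * dA x y)" using fb C' by (simp add: mult_left_mono)
    then have upper: "dE (g (f x)) (g (f y)) \<le> (C * C') * dA x y" using gb by (simp add: ac_simps)
    show ?thesis using lower upper ..
  qed
  then show ?thesis
    unfolding bi_lipschitz_equiv_def using bij_betw_trans[OF f g] C C'
    by (intro exI[of _ "g \<circ> f"] exI[of _ "C * C'"]) auto
qed

lemma contraction_vector_nth:
  "contraction_vector d r \<Longrightarrow> t < length r \<Longrightarrow> 0 < r ! t \<and> r ! t < 1"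
  unfolding contraction_vector_def by (auto dest: nth_mem)

abbreviation (input) word_shift :: "(nat \<Rightarrow> 'a) \<Rightarrow> nat \<Rightarrow> 'a" where
  "word_shift w \<equiv> \<lambda>i. w (Suc i)"

lemma infwords_word_shift: "w \<in> infwords m \<Longrightarrow> word_shift w \<in> infwords m"
  unfolding infwords_def by auto

lemma ratio_in_set:
  "(\<And>t. t < length r \<Longrightarrow> 0 < r ! t \<and> r ! t < 1) \<Longrightarrow> a \<in> set r \<Longrightarrow> 0 < a \<and> a < 1"
  by (metis in_set_conv_nth)

definition prefix_ratio :: "real list \<Rightarrow> (nat \<Rightarrow> nat) \<Rightarrow> nat \<Rightarrow> real" where
  "prefix_ratio r w k = (\<Prod>i<k. r ! w i)"

definition first_diff :: "(nat \<Rightarrow> nat) \<Rightarrow> (nat \<Rightarrow> nat) \<Rightarrow> nat" where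
  "first_diff w v = (LEAST k. w k \<noteq> v k)"

definition word_dist :: "real list \<Rightarrow> (nat \<Rightarrow> nat) \<Rightarrow> (nat \<Rightarrow> nat) \<Rightarrow> real" where
  "word_dist r w v = (if w = v then 0 else prefix_ratio r w (first_diff w v))"

primrec word_map :: "(nat \<Rightarrow> 'x \<Rightarrow> 'x) \<Rightarrow> (nat \<Rightarrow> nat) \<Rightarrow> nat \<Rightarrow> 'x \<Rightarrow> 'x" where
  "word_map psi v 0 = id"
| "word_map psi v (Suc k) = psi (v 0) \<circ> word_map psi (word_shift v) k"

lemma prefix_ratio_Suc: "prefix_ratio r w (Suc k) = r ! w 0 * prefix_ratio r (word_shift w) k"
  unfolding prefix_ratio_def by (simp add: prod.lessThan_Suc_shift del: prod.lessThan_Suc)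

lemma prefix_ratio_bounds:
  assumes "w \<in> infwords (length r)" and "\<And>t. t < length r \<Longrightarrow> 0 < r ! t \<and> r ! t < 1"
  shows "Min (set r) ^ k \<le> prefix_ratio r w k" "0 < prefix_ratio r w k"
    "prefix_ratio r w k \<le> Max (set r) ^ k"
proof -
  have letters: "w i < length r" for i using assms(1) unfolding infwords_def by auto
  then have "r \<noteq> []" by (metis length_0_conv not_less0)
  then have "Min (set r) \<in> set r" by simp
  then have "0 \<le> Min (set r)" using ratio_in_set[OF assms(2)] less_imp_le by blast
  with letters have "(\<Prod>i<k. Min (set r)) \<le> prefix_ratio r w k"
    unfolding prefix_ratio_def by (intro prod_mono) simp
  then show "Min (set r) ^ k \<le> prefix_ratio r w k" by simp
  show "0 < prefix_ratio r w k"
    unfolding prefix_ratio_def using letters assms(2) by (intro prod_pos) blast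
  have "prefix_ratio r w k \<le> (\<Prod>i<k. Max (set r))"
    unfolding prefix_ratio_def using letters assms(2) by (intro prod_mono) (auto intro: less_imp_le)
  then show "prefix_ratio r w k \<le> Max (set r) ^ k" by simp
qed

lemma word_dist_nonneg:
  "w \<in> infwords (length r) \<Longrightarrow> (\<And>t. t < length r \<Longrightarrow> 0 < r ! t \<and> r ! t < 1) \<Longrightarrow> 0 \<le> word_dist r w v"
  unfolding word_dist_def using prefix_ratio_bounds(2) by (simp add: less_imp_le)

lemma word_dist_eq_0_iff:
  assumes "w \<in> infwords (length r)" and "\<And>t. t < length r \<Longrightarrow> 0 < r ! t \<and> r ! t < 1"
  shows "word_dist r w v = 0 \<longleftrightarrow> w = v"
  using prefix_ratio_bounds(2)[OF assms, of "first_diff w v"] unfolding word_dist_def by auto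

lemma word_dist_le_1:
  assumes "w \<in> infwords (length r)" and "\<And>t. t < length r \<Longrightarrow> 0 < r ! t \<and> r ! t < 1"
  shows "word_dist r w v \<le> 1"
proof -
  have "r \<noteq> []" using assms(1) unfolding infwords_def by auto
  then have "0 < Max (set r) \<and> Max (set r) < 1" by (intro ratio_in_set[OF assms(2)] Max_in) auto
  have "prefix_ratio r w (first_diff w v) \<le> Max (set r) ^ first_diff w v"
    by (rule prefix_ratio_bounds(3)[OF assms])
  also have "\<dots> \<le> 1" using \<open>0 < Max (set r) \<and> Max (set r) < 1\<close> by (simp add: power_le_one)
  finally show ?thesis by (simp add: word_dist_def)
qed

lemma first_diff:
  assumes "w \<noteq> v"
  shows "w (first_diff w v) \<noteq> v (first_diff w v)" "\<And>i. i < first_diff w v \<Longrightarrow> w i = v i"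
proof -
  from assms obtain k where "w k \<noteq> v k" by auto
  then show "w (first_diff w v) \<noteq> v (first_diff w v)"
    unfolding first_diff_def by (rule LeastI)
  show "\<And>i. i < first_diff w v \<Longrightarrow> w i = v i"
    unfolding first_diff_def using not_less_Least by blast
qed

lemma word_dist_Cons:
  assumes "w 0 = v 0"
  shows "word_dist r w v = r ! w 0 * word_dist r (word_shift w) (word_shift v)"
proof (cases "w = v")
  case False
  have "word_shift w \<noteq> word_shift v"
  proof
    assume "word_shift w = word_shift v"
    then have "w i = v i" for i using assms by (cases i) (auto dest: fun_cong)
    with False show False by auto
  qed
  moreover obtain n where "w n \<noteq> v n" using False by auto
  then have "first_diff w v = Suc (first_diff (word_shift w) (word_shift v))"
    unfolding first_diff_def by (rule Least_Suc[of _ n]) (use \<open>w n \<noteq> v n\<close> assms in auto)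
  ultimately show ?thesis using False by (simp add: word_dist_def prefix_ratio_Suc)
qed (simp add: word_dist_def)

lemma word_map_cong: "(\<And>i. i < k \<Longrightarrow> w i = v i) \<Longrightarrow> word_map psi w k = word_map psi v k"
proof (induction k arbitrary: w v)
  case (Suc k)
  then have "word_map psi (word_shift w) k = word_map psi (word_shift v) k" by (intro Suc.IH) simp
  with Suc.prems[of 0] show ?case by simp
qed simp

lemma word_map_Suc_right: "word_map psi v (Suc k) = word_map psi v k \<circ> psi (v k)"
proof (induction k arbitrary: v)
  case (Suc k)
  have "word_map psi v (Suc (Suc k)) = psi (v 0) \<circ> word_map psi (word_shift v) (Suc k)"
    by (simp only: word_map.simps)
  also have "\<dots> = psi (v 0) \<circ> (word_map psi (word_shift v) k \<circ> psi (v (Suc k)))"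
    by (simp only: Suc.IH)
  finally show ?case by (simp only: word_map.simps comp_assoc)
qed simp

lemma word_map_into:
  assumes "\<And>t x. t < m \<Longrightarrow> x \<in> X \<Longrightarrow> psi t x \<in> X" and "v \<in> infwords m" and "x \<in> X"
  shows "word_map psi v k x \<in> X"
  using assms(2)
proof (induction k arbitrary: v)
  case (Suc k)
  then show ?case using assms(1,3) infwords_word_shift by (simp add: infwords_def)
qed (simp add: assms(3))

lemma word_map_scaling:
  assumes "\<And>t x y. t < length r \<Longrightarrow> x \<in> X \<Longrightarrow> y \<in> X \<Longrightarrow> d (psi t x) (psi t y) = r ! t * d x y"
    and "\<And>t x. t < length r \<Longrightarrow> x \<in> X \<Longrightarrow> psi t x \<in> X"
    and "v \<in> infwords (length r)" and "x \<in> X" and "y \<in> X"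
  shows "d (word_map psi v k x) (word_map psi v k y) = prefix_ratio r v k * d x y"
  using assms(3)
proof (induction k arbitrary: v)
  case 0
  then show ?case by (simp add: prefix_ratio_def)
next
  case (Suc k)
  have "v 0 < length r" using Suc.prems unfolding infwords_def by auto
  moreover have "word_map psi (word_shift v) k x \<in> X" "word_map psi (word_shift v) k y \<in> X"
    using word_map_into[OF assms(2) infwords_word_shift[OF Suc.prems]] assms(4,5) by auto
  ultimately show ?case
    using assms(1) Suc.IH[OF infwords_word_shift[OF Suc.prems]] by (simp add: prefix_ratio_Suc)
qed

section \<open>Dust-like systems and their coding maps\<close>

locale dust_system =
  fixes r :: "real list" and X :: "'x set" and d :: "'x \<Rightarrow> 'x \<Rightarrow> real"
    and psi :: "nat \<Rightarrow> 'x \<Rightarrow> 'x" and D c :: real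
  assumes ratio_bounds: "\<And>t. t < length r \<Longrightarrow> 0 < r ! t \<and> r ! t < 1"
    and maps_into: "\<And>t x. t < length r \<Longrightarrow> x \<in> X \<Longrightarrow> psi t x \<in> X"
    and scaling: "\<And>t x y. t < length r \<Longrightarrow> x \<in> X \<Longrightarrow> y \<in> X \<Longrightarrow> d (psi t x) (psi t y) = r ! t * d x y"
    and covering: "\<And>x. x \<in> X \<Longrightarrow> \<exists>t<length r. x \<in> psi t ` X"
    and separated: "\<And>s t x y. s < length r \<Longrightarrow> t < length r \<Longrightarrow> s \<noteq> t \<Longrightarrow> x \<in> X \<Longrightarrow> y \<in> X
      \<Longrightarrow> c \<le> d (psi s x) (psi t y)"
    and separation_pos: "c > 0"
    and diameter_bound: "\<And>x y. x \<in> X \<Longrightarrow> y \<in> X \<Longrightarrow> d x y \<le> D"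
    and nested_images_meet: "\<And>v. v \<in> infwords (length r) \<Longrightarrow> \<exists>x\<in>X. \<forall>k. x \<in> word_map psi v k ` X"
    and dist_nonneg: "\<And>x y. x \<in> X \<Longrightarrow> y \<in> X \<Longrightarrow> 0 \<le> d x y"
    and dist_self: "\<And>x. x \<in> X \<Longrightarrow> d x x = 0"
    and dist_eq_0D: "\<And>x y. x \<in> X \<Longrightarrow> y \<in> X \<Longrightarrow> d x y = 0 \<Longrightarrow> x = y"
begin

lemma psi_eq_psiD:
  assumes "s < length r" "t < length r" "x \<in> X" "y \<in> X" "psi s x = psi t y"
  shows "s = t \<and> x = y"
proof -
  have zero: "d (psi s x) (psi t y) = 0"
    using dist_self[OF maps_into[OF assms(1,3)]] assms(5) by simp
  then have "s = t" using separated[OF assms(1,2) _ assms(3,4)] separation_pos by fastforce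
  with zero have "r ! t * d x y = 0" using scaling[OF assms(2,3,4)] by simp
  then show ?thesis using \<open>s = t\<close> ratio_bounds[OF assms(2)] dist_eq_0D[OF assms(3,4)] by simp
qed

text \<open>The first letter of the address of a point, and the point one level down.\<close>
definition first_letter :: "'x \<Rightarrow> nat" where
  "first_letter x = (SOME t. t < length r \<and> x \<in> psi t ` X)"

definition lift :: "'x \<Rightarrow> 'x" where
  "lift x = (SOME y. y \<in> X \<and> x = psi (first_letter x) y)"

lemma first_letter_lift:
  assumes "x \<in> X"
  shows "first_letter x < length r" "lift x \<in> X" "psi (first_letter x) (lift x) = x"
proof -
  have "\<exists>t. t < length r \<and> x \<in> psi t ` X" using covering[OF assms] by blast
  then have "first_letter x < length r \<and> x \<in> psi (first_letter x) ` X"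
    unfolding first_letter_def by (rule someI_ex)
  moreover from this have "\<exists>y. y \<in> X \<and> x = psi (first_letter x) y" by blast
  then have "lift x \<in> X \<and> x = psi (first_letter x) (lift x)"
    unfolding lift_def by (rule someI_ex)
  ultimately show "first_letter x < length r" "lift x \<in> X" "psi (first_letter x) (lift x) = x"
    by auto
qed

lemma first_letter_lift_psi:
  assumes "t < length r" "y \<in> X"
  shows "first_letter (psi t y) = t" "lift (psi t y) = y"
proof -
  note fl = first_letter_lift[OF maps_into[OF assms]]
  from psi_eq_psiD[OF fl(1) assms(1) fl(2) assms(2) fl(3)]
  show "first_letter (psi t y) = t" "lift (psi t y) = y" by simp_all
qed

definition coding :: "'x \<Rightarrow> nat \<Rightarrow> nat" where
  "coding x k = first_letter ((lift ^^ k) x)"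

lemma lift_iterate_in: "x \<in> X \<Longrightarrow> (lift ^^ k) x \<in> X"
  by (induction k) (auto simp: first_letter_lift)

lemma coding_lift: "coding (lift x) = word_shift (coding x)"
  unfolding coding_def by (simp add: fun_eq_iff funpow_Suc_right del: funpow.simps)

lemma coding_in: "x \<in> X \<Longrightarrow> coding x \<in> infwords (length r)"
  unfolding infwords_def coding_def using first_letter_lift lift_iterate_in by auto

lemma word_map_coding: "x \<in> X \<Longrightarrow> word_map psi (coding x) k ((lift ^^ k) x) = x"
proof (induction k arbitrary: x)
  case (Suc k)
  have "word_map psi (coding x) (Suc k) ((lift ^^ Suc k) x)
      = psi (first_letter x) (word_map psi (coding (lift x)) k ((lift ^^ k) (lift x)))"
    by (simp add: coding_lift funpow_Suc_right del: funpow.simps) (simp add: coding_def)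
  also have "\<dots> = x" using Suc first_letter_lift by simp
  finally show ?case .
qed simp

lemma dist_via_coding:
  assumes "x \<in> X" "y \<in> X" "\<And>i. i < k \<Longrightarrow> coding x i = coding y i"
  shows "d x y = prefix_ratio r (coding x) k * d ((lift ^^ k) x) ((lift ^^ k) y)"
proof -
  have "word_map psi (coding y) k = word_map psi (coding x) k"
    by (rule word_map_cong) (simp add: assms(3))
  then have "d x y = d (word_map psi (coding x) k ((lift ^^ k) x)) (word_map psi (coding x) k ((lift ^^ k) y))"
    using word_map_coding[OF assms(1), of k] word_map_coding[OF assms(2), of k] by simp
  then show ?thesis
    using word_map_scaling[where r = r and d = d and X = X and psi = psi, OF scaling maps_into]
      coding_in lift_iterate_in assms(1,2)
    by simp
qed

lemma coding_inj:
  assumes "x \<in> X" "y \<in> X" "coding x = coding y"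
  shows "x = y"
proof -
  let ?q = "Max (set r)"
  have "coding x \<in> infwords (length r)" using coding_in assms by simp
  then have "r \<noteq> []" unfolding infwords_def by auto
  then have "?q < 1" using ratio_bounds by (auto simp: in_set_conv_nth)
  have small: "d x y \<le> ?q ^ k * D" for k
  proof -
    have "d x y = prefix_ratio r (coding x) k * d ((lift ^^ k) x) ((lift ^^ k) y)"
      using dist_via_coding assms by simp
    also have "\<dots> \<le> ?q ^ k * D"
    proof (rule mult_mono)
      show "prefix_ratio r (coding x) k \<le> ?q ^ k" "0 \<le> ?q ^ k"
        using prefix_ratio_bounds(2,3)[OF coding_in[OF assms(1)] ratio_bounds, of k] by simp_all
      show "d ((lift ^^ k) x) ((lift ^^ k) y) \<le> D" "0 \<le> d ((lift ^^ k) x) ((lift ^^ k) y)"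
        using diameter_bound dist_nonneg lift_iterate_in assms(1,2) by simp_all
    qed
    finally show ?thesis .
  qed
  have "d x y = 0"
  proof (rule ccontr)
    assume "d x y \<noteq> 0"
    then have "d x y > 0" using dist_nonneg assms by force
    moreover from this have "D > 0" using small[of 0] by simp
    ultimately obtain k where "?q ^ k < d x y / D"
      using real_arch_pow_inv[OF divide_pos_pos \<open>?q < 1\<close>] by blast
    with \<open>D > 0\<close> small[of k] show False by (simp add: field_simps)
  qed
  then show ?thesis using dist_eq_0D assms by simp
qed

text \<open>At the first index where the codings differ, the lifted points lie in different pieces,
  which are at distance \<open>\<ge> c\<close>.\<close>
lemma dist_coding_bounds:
  assumes "x \<in> X" "y \<in> X"
  shows "c * word_dist r (coding x) (coding y) \<le> d x y" "d x y \<le> D * word_dist r (coding x) (coding y)"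
proof -
  let ?w = "word_dist r (coding x) (coding y)"
  have "c * ?w \<le> d x y \<and> d x y \<le> D * ?w"
  proof (cases "x = y")
    case False
    let ?k = "first_diff (coding x) (coding y)"
    let ?x = "(lift ^^ ?k) x" and ?y = "(lift ^^ ?k) y"
    have ne: "coding x \<noteq> coding y" using coding_inj assms False by auto
    have inX: "?x \<in> X" "?y \<in> X" using lift_iterate_in assms by auto
    have e: "d x y = ?w * d ?x ?y"
      using dist_via_coding[OF assms first_diff(2)[OF ne]] ne by (simp add: word_dist_def)
    have "first_letter ?x \<noteq> first_letter ?y"
      using first_diff(1)[OF ne] by (simp add: coding_def)
    then have "c \<le> d ?x ?y"
      using separated[of "first_letter ?x" "first_letter ?y" "lift ?x" "lift ?y"]
        first_letter_lift inX by simp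
    moreover have "d ?x ?y \<le> D" using diameter_bound inX by simp
    moreover have "0 \<le> ?w" using word_dist_nonneg[OF coding_in[OF assms(1)] ratio_bounds] .
    ultimately have "c * ?w \<le> d ?x ?y * ?w" "d ?x ?y * ?w \<le> D * ?w"
      by (simp_all add: mult_right_mono)
    then show ?thesis unfolding e by (metis mult.commute)
  qed (simp add: word_dist_def dist_self assms)
  then show "c * ?w \<le> d x y" "d x y \<le> D * ?w" by simp_all
qed

lemma coding_surj:
  assumes "v \<in> infwords (length r)"
  shows "\<exists>x\<in>X. coding x = v"
proof -
  have lift_step: "first_letter x = v 0 \<and> (\<forall>k. lift x \<in> word_map psi (word_shift v) k ` X)"
    if "x \<in> X" and nested: "\<forall>k. x \<in> word_map psi v k ` X" and v: "v \<in> infwords (length r)" for x v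
  proof -
    have v0: "v 0 < length r" using v unfolding infwords_def by auto
    have "first_letter x = v 0 \<and> lift x \<in> word_map psi (word_shift v) k ` X" for k
    proof -
      obtain z where "z \<in> X" "x = psi (v 0) (word_map psi (word_shift v) k z)"
        using nested by (auto dest: spec[of _ "Suc k"])
      then show ?thesis
        using first_letter_lift_psi[OF v0] word_map_into[OF maps_into infwords_word_shift[OF v]]
        by auto
    qed
    then show ?thesis by simp
  qed
  have "coding x k = v k" if "x \<in> X" "\<forall>k. x \<in> word_map psi v k ` X" "v \<in> infwords (length r)"
    for x v k
    using that
  proof (induction k arbitrary: x v)
    case 0
    then show ?case using lift_step by (simp add: coding_def)
  next
    case (Suc k)
    have "coding x (Suc k) = coding (lift x) k" by (simp add: coding_lift)
    also have "\<dots> = word_shift v k"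
      using Suc.IH lift_step[OF Suc.prems] first_letter_lift(2) infwords_word_shift Suc.prems by blast
    finally show ?case by simp
  qed
  with nested_images_meet[OF assms] assms show ?thesis by blast
qed

theorem bi_lipschitz_equiv_coding: "bi_lipschitz_equiv X d (infwords (length r)) (word_dist r)"
proof -
  have "bij_betw coding X (infwords (length r))"
    unfolding bij_betw_def inj_on_def using coding_inj coding_in coding_surj by fast
  moreover define C where "C = max 1 (max D (1 / c))"
  have "inverse C * d x y \<le> word_dist r (coding x) (coding y) \<and> word_dist r (coding x) (coding y) \<le> C * d x y"
    if "x \<in> X" "y \<in> X" for x y
  proof
    have nonneg: "0 \<le> word_dist r (coding x) (coding y)" "0 \<le> d x y"
      using word_dist_nonneg[OF coding_in ratio_bounds] dist_nonneg that by auto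
    have "C \<ge> D" "C \<ge> 1 / c" "C > 0" unfolding C_def by auto
    have "d x y \<le> C * word_dist r (coding x) (coding y)"
      using dist_coding_bounds(2)[OF that] mult_right_mono[OF \<open>C \<ge> D\<close> nonneg(1)] by linarith
    then show "inverse C * d x y \<le> word_dist r (coding x) (coding y)"
      using \<open>C > 0\<close> by (simp add: field_simps)
    have "word_dist r (coding x) (coding y) \<le> (1 / c) * d x y"
      using dist_coding_bounds(1)[OF that] separation_pos by (simp add: field_simps)
    also have "\<dots> \<le> C * d x y" using mult_right_mono[OF \<open>C \<ge> 1 / c\<close> nonneg(2)] .
    finally show "word_dist r (coding x) (coding y) \<le> C * d x y" .
  qed
  moreover have "C > 0" unfolding C_def by auto
  ultimately show ?thesis unfolding bi_lipschitz_equiv_def by blast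
qed

end

section \<open>Dust-like self-similar sets\<close>

lemma compact_disjoint_images_separated:
  fixes S :: "'i \<Rightarrow> 'a::metric_space set"
  assumes "finite I" and "\<And>i. i \<in> I \<Longrightarrow> compact (S i) \<and> S i \<noteq> {}"
    and "\<And>i j. i \<in> I \<Longrightarrow> j \<in> I \<Longrightarrow> i \<noteq> j \<Longrightarrow> S i \<inter> S j = {}"
  shows "\<exists>c>0. \<forall>i\<in>I. \<forall>j\<in>I. i \<noteq> j \<longrightarrow> (\<forall>x\<in>S i. \<forall>y\<in>S j. c \<le> dist x y)"
proof -
  define c where "c = Min (insert 1 {setdist (S i) (S j) | i j. i \<in> I \<and> j \<in> I \<and> i \<noteq> j})"
  have fin: "finite {setdist (S i) (S j) | i j. i \<in> I \<and> j \<in> I \<and> i \<noteq> j}"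
    by (rule finite_subset[of _ "(\<lambda>(i, j). setdist (S i) (S j)) ` (I \<times> I)"]) (use assms(1) in auto)
  have "0 < setdist (S i) (S j)" if "i \<in> I" "j \<in> I" "i \<noteq> j" for i j
  proof -
    from assms(2)[OF that(1)] assms(2)[OF that(2)] assms(3)[OF that]
    have "setdist (S i) (S j) \<noteq> 0" by (simp add: setdist_eq_0_compact_closed compact_imp_closed)
    then show ?thesis using setdist_pos_le[of "S i" "S j"] by linarith
  qed
  then have "c > 0" unfolding c_def using fin by (subst Min_gr_iff) auto
  moreover have "c \<le> dist x y" if "i \<in> I" "j \<in> I" "i \<noteq> j" "x \<in> S i" "y \<in> S j" for i j x y
  proof -
    have "c \<le> setdist (S i) (S j)" unfolding c_def using fin that(1-3) by (intro Min_le) auto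
    also have "\<dots> \<le> dist x y" using that(4,5) by (rule setdist_le_dist)
    finally show ?thesis .
  qed
  ultimately show ?thesis by blast
qed

lemma compact_nested_images_meet:
  fixes psi :: "nat \<Rightarrow> 'a::heine_borel \<Rightarrow> 'a"
  assumes "compact K" "K \<noteq> {}" and "\<And>t. t < m \<Longrightarrow> continuous_on K (psi t) \<and> psi t ` K \<subseteq> K"
    and "v \<in> infwords m"
  shows "\<exists>x\<in>K. \<forall>k. x \<in> word_map psi v k ` K"
proof -
  have "continuous_on K (word_map psi w k) \<and> word_map psi w k ` K \<subseteq> K" if "w \<in> infwords m" for w k
    using that
  proof (induction k arbitrary: w)
    case (Suc k)
    let ?g = "word_map psi (word_shift w) k"
    have "w 0 < m" using Suc.prems by (simp add: infwords_def)
    then have psi: "continuous_on K (psi (w 0))" "psi (w 0) ` K \<subseteq> K" using assms(3) by blast+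
    have g: "continuous_on K ?g" "?g ` K \<subseteq> K" using Suc.IH[OF infwords_word_shift[OF Suc.prems]] by blast+
    have "(psi (w 0) \<circ> ?g) ` K = psi (w 0) ` (?g ` K)" by (rule image_comp[symmetric])
    also have "\<dots> \<subseteq> psi (w 0) ` K" by (rule image_mono[OF g(2)])
    also have "\<dots> \<subseteq> K" by (rule psi(2))
    finally have "(psi (w 0) \<circ> ?g) ` K \<subseteq> K" .
    moreover have "continuous_on K (psi (w 0) \<circ> ?g)"
      using continuous_on_compose[OF g(1) continuous_on_subset[OF psi(1) g(2)]] .
    ultimately show ?case unfolding word_map.simps(2) by blast
  qed (simp add: continuous_on_id)
  note word_map_K = this[OF assms(4)]
  define F where "F k = word_map psi v k ` K" for k
  have "F (Suc k) \<subseteq> F k" for k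
  proof -
    have "psi (v k) ` K \<subseteq> K" using assms(3,4) unfolding infwords_def by blast
    then show ?thesis unfolding F_def word_map_Suc_right image_comp[symmetric] by (rule image_mono)
  qed
  then have "decseq F" by (rule decseq_SucI)
  moreover have "compact (F k)" for k
    unfolding F_def using word_map_K assms(1) by (intro compact_continuous_image) auto
  moreover have "F k \<noteq> {}" for k unfolding F_def using assms(2) by simp
  ultimately have "\<Inter> (range F) \<noteq> {}" by (intro compact_nest) (auto dest: decseqD)
  then obtain x where "\<forall>k. x \<in> F k" by blast
  moreover from this have "x \<in> K" unfolding F_def by (metis word_map.simps(1) image_id id_def)
  ultimately show ?thesis unfolding F_def by blast
qed

lemma dustlike_dust_system:
  fixes K :: "'a::euclidean_space set"
  assumes "contraction_vector d rho" and "K \<in> dustlike rho"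
  shows "\<exists>phi D c. dust_system rho K dist phi D c"
proof -
  obtain phi :: "nat \<Rightarrow> 'a \<Rightarrow> 'a" where
    similarities: "\<forall>t<length rho. \<forall>x y. dist (phi t x) (phi t y) = rho ! t * dist x y" and
    "K \<noteq> {}" "compact K" and invariant: "K = (\<Union>t<length rho. phi t ` K)" and
    pieces_disjoint: "\<forall>s<length rho. \<forall>t<length rho. s \<noteq> t \<longrightarrow> phi s ` K \<inter> phi t ` K = {}"
    using assms(2) unfolding dustlike_def by (elim CollectE exE conjE) blast
  note scaling = similarities[rule_format] and disjoint = pieces_disjoint[rule_format]
  have phi_cont: "continuous_on K (phi t)" if "t < length rho" for t
  proof (rule lipschitz_on_continuous_on)
    show "(rho ! t)-lipschitz_on K (phi t)"
      using scaling that contraction_vector_nth[OF assms(1) that] by (intro lipschitz_onI) auto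
  qed
  obtain D where D: "\<And>x y. x \<in> K \<Longrightarrow> y \<in> K \<Longrightarrow> dist x y \<le> D"
    using compact_imp_bounded[OF \<open>compact K\<close>] unfolding bounded_two_points by blast
  have "\<exists>c>0. \<forall>s\<in>{..<length rho}. \<forall>t\<in>{..<length rho}. s \<noteq> t \<longrightarrow>
      (\<forall>x\<in>phi s ` K. \<forall>y\<in>phi t ` K. c \<le> dist x y)"
    using disjoint compact_continuous_image[OF phi_cont \<open>compact K\<close>] \<open>K \<noteq> {}\<close>
    by (intro compact_disjoint_images_separated) auto
  then obtain c where "c > 0" and
    c: "\<And>s t. s < length rho \<Longrightarrow> t < length rho \<Longrightarrow> s \<noteq> t \<Longrightarrow>
      \<forall>x\<in>phi s ` K. \<forall>y\<in>phi t ` K. c \<le> dist x y"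
    by blast
  have "dust_system rho K dist phi D c"
  proof
    show maps_into: "phi t x \<in> K" if "t < length rho" "x \<in> K" for t x
    proof -
      have "phi t x \<in> (\<Union>t<length rho. phi t ` K)" using that by blast
      then show ?thesis unfolding invariant[symmetric] .
    qed
    show "\<exists>x\<in>K. \<forall>k. x \<in> word_map phi v k ` K" if "v \<in> infwords (length rho)" for v
    proof (rule compact_nested_images_meet[OF \<open>compact K\<close> \<open>K \<noteq> {}\<close> _ that])
      show "continuous_on K (phi t) \<and> phi t ` K \<subseteq> K" if "t < length rho" for t
        using phi_cont[OF that] maps_into[OF that] by blast
    qed
    show "\<And>t. t < length rho \<Longrightarrow> 0 < rho ! t \<and> rho ! t < 1"
      using contraction_vector_nth[OF assms(1)] .
    show "\<And>t x y. t < length rho \<Longrightarrow> x \<in> K \<Longrightarrow> y \<in> K \<Longrightarrow> dist (phi t x) (phi t y) = rho ! t * dist x y"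
      using scaling .
    show "\<exists>t<length rho. x \<in> phi t ` K" if "x \<in> K" for x
    proof -
      from that have "x \<in> (\<Union>t<length rho. phi t ` K)" unfolding invariant[symmetric] .
      then show ?thesis by blast
    qed
    show "c \<le> dist (phi s x) (phi t y)"
      if "s < length rho" "t < length rho" "s \<noteq> t" "x \<in> K" "y \<in> K" for s t x y
      using c[OF that(1-3)] that(4,5) by blast
    show "c > 0" by fact
    show "\<And>x y. x \<in> K \<Longrightarrow> y \<in> K \<Longrightarrow> dist x y \<le> D" by (rule D)
  qed simp_all
  then show ?thesis by (intro exI)
qed

lemma dustlike_bi_lipschitz_equiv_symbolic:
  fixes K :: "'a::euclidean_space set"
  assumes "contraction_vector d rho" and "K \<in> dustlike rho"
  shows "bi_lipschitz_equiv K dist (infwords (length rho)) (word_dist rho)"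
proof -
  obtain phi D c where "dust_system rho K dist phi D c" using dustlike_dust_system[OF assms] by blast
  then show ?thesis by (rule dust_system.bi_lipschitz_equiv_coding)
qed

section \<open>Symbolic spaces of derived contraction vectors\<close>

definition prepend :: "nat list \<Rightarrow> (nat \<Rightarrow> nat) \<Rightarrow> nat \<Rightarrow> nat" where
  "prepend u w = (\<lambda>i. if i < length u then u ! i else w (i - length u))"

lemma prepend_Nil [simp]: "prepend [] w = w"
  unfolding prepend_def by simp

lemma prepend_Cons_0 [simp]: "prepend (a # u) w 0 = a"
  unfolding prepend_def by simp

lemma prepend_Cons_Suc [simp]: "prepend (a # u) w (Suc i) = prepend u w i"
  unfolding prepend_def by auto

lemma prepend_in_infwords: "u \<in> finwords m \<Longrightarrow> w \<in> infwords m \<Longrightarrow> prepend u w \<in> infwords m"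
  unfolding prepend_def infwords_def finwords_def by auto

lemma word_dist_prepend: "word_dist r (prepend u w) (prepend u v) = word_ratio r u * word_dist r w v"
proof (induction u)
  case (Cons a u)
  have "word_dist r (prepend (a # u) w) (prepend (a # u) v) = r ! a * word_dist r (prepend u w) (prepend u v)"
    using word_dist_Cons[of "prepend (a # u) w" "prepend (a # u) v" r] by simp
  with Cons.IH show ?case by (simp add: word_ratio_def)
qed (simp add: word_ratio_def)

lemma cylinder_prepend: "w \<in> infwords m \<Longrightarrow> w \<in> cylinder m u \<Longrightarrow> w = prepend u (\<lambda>i. w (i + length u))"
  unfolding cylinder_def prepend_def by auto

lemma disjoint_cylinders_differ:
  assumes "u \<in> finwords m" "u' \<in> finwords m" "cylinder m u \<inter> cylinder m u' = {}"
  shows "\<exists>i<min (length u) (length u'). u ! i \<noteq> u' ! i"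
proof (rule ccontr)
  assume "\<not> ?thesis"
  then have agree: "\<And>i. i < min (length u) (length u') \<Longrightarrow> u ! i = u' ! i" by auto
  have "0 < m" using assms(1) unfolding finwords_def by (cases u) auto
  then have zero: "(\<lambda>_. 0) \<in> infwords m" unfolding infwords_def by simp
  obtain v where v: "v \<in> {u, u'}" "length v = max (length u) (length u')"
    by (cases "length u' \<le> length u") auto
  then have "v \<in> finwords m" using assms(1,2) by auto
  then have "prepend v (\<lambda>_. 0) \<in> cylinder m u \<inter> cylinder m u'"
    using prepend_in_infwords[OF _ zero] agree v unfolding cylinder_def prepend_def by auto
  with assms(3) show False by blast
qed

text \<open>The infinite concatenation \<open>j\<^bsub>v 0\<^esub> j\<^bsub>v 1\<^esub> j\<^bsub>v 2\<^esub> \<dots>\<close>; the branch for an empty word is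
  junk that only makes the recursion total (words of a cut set are nonempty).\<close>
function concat_words :: "nat list list \<Rightarrow> (nat \<Rightarrow> nat) \<Rightarrow> nat \<Rightarrow> nat" where
  "concat_words js v p = (if js ! v 0 = [] then 0
     else if p < length (js ! v 0) then js ! v 0 ! p
     else concat_words js (word_shift v) (p - length (js ! v 0)))"
  by auto
termination
  by (relation "Wellfounded.measure (\<lambda>(js, v, p). p)")
    (auto simp: not_less intro!: diff_less, metis le_zero_eq length_0_conv not_gr0)

declare concat_words.simps [simp del]

lemma concat_words_unfold:
  "js ! v 0 \<noteq> [] \<Longrightarrow> concat_words js v = prepend (js ! v 0) (concat_words js (word_shift v))"
  by (rule ext, subst concat_words.simps) (simp add: prepend_def)

lemma concat_words_in_infwords:
  assumes "\<And>i. js ! v i \<in> finwords m"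
  shows "concat_words js v \<in> infwords m"
proof -
  have "concat_words js v p < m" for p
    using assms
  proof (induction js v p rule: concat_words.induct)
    case (1 js v p)
    then have "js ! v 0 \<in> finwords m" by simp
    with 1 show ?case
      by (subst concat_words.simps) (auto simp: finwords_def dest: nth_mem)
  qed
  then show ?thesis unfolding infwords_def by blast
qed

lemma concat_words_in_nested_images:
  assumes "\<And>i. js ! v i \<in> finwords m"
  shows "concat_words js v \<in> word_map (\<lambda>t. prepend (js ! t)) v k ` infwords m"
  using assms
proof (induction k arbitrary: v)
  case 0
  then show ?case using concat_words_in_infwords by simp
next
  case (Suc k)
  then have "js ! v 0 \<noteq> []" by (simp add: finwords_def)
  with Suc.IH[of "word_shift v"] Suc.prems show ?case
    by (auto simp: concat_words_unfold image_comp)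
qed

lemma cut_set_prepend_separated:
  assumes "\<And>t. t < length r \<Longrightarrow> 0 < r ! t \<and> r ! t < 1"
    and "distinct js" "cut_set (length r) (set js)" "s < length js" "t < length js" "s \<noteq> t"
    and "x \<in> infwords (length r)"
  shows "Min (set r) ^ Max (length ` set js) \<le> word_dist r (prepend (js ! s) x) (prepend (js ! t) y)"
proof -
  let ?a = "prepend (js ! s) x" and ?b = "prepend (js ! t) y"
  have "js ! s \<noteq> js ! t" using assms(2,4-6) by (simp add: nth_eq_iff_index_eq)
  then have "cylinder (length r) (js ! s) \<inter> cylinder (length r) (js ! t) = {}"
    using assms(3-5) unfolding cut_set_def by auto
  moreover have "js ! s \<in> finwords (length r)" "js ! t \<in> finwords (length r)"
    using assms(3-5) unfolding cut_set_def by auto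
  ultimately obtain i where i: "i < min (length (js ! s)) (length (js ! t))" "js ! s ! i \<noteq> js ! t ! i"
    using disjoint_cylinders_differ by blast
  then have "?a i \<noteq> ?b i" by (simp add: prepend_def)
  then have "?a \<noteq> ?b" and "first_diff ?a ?b \<le> i" unfolding first_diff_def by (auto intro: Least_le)
  moreover have "length (js ! s) \<le> Max (length ` set js)" using assms(4) by (intro Max_ge) auto
  with i have "i \<le> Max (length ` set js)" by linarith
  moreover have "?a \<in> infwords (length r)"
    by (rule prepend_in_infwords[OF \<open>js ! s \<in> finwords (length r)\<close> assms(7)])
  moreover have "r \<noteq> []" using assms(7) unfolding infwords_def by auto
  then have "0 < Min (set r) \<and> Min (set r) < 1" by (intro ratio_in_set[OF assms(1)] Min_in) auto
  ultimately have "Min (set r) ^ Max (length ` set js) \<le> Min (set r) ^ first_diff ?a ?b"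
    by (intro power_decreasing) auto
  also have "\<dots> \<le> prefix_ratio r ?a (first_diff ?a ?b)"
    by (rule prefix_ratio_bounds(1)[OF \<open>?a \<in> infwords (length r)\<close> assms(1)])
  finally show ?thesis using \<open>?a \<noteq> ?b\<close> by (simp add: word_dist_def)
qed

lemma derived_dust_system:
  assumes "contraction_vector d rho" "contraction_vector d tau"
    and js: "distinct js" "cut_set (length rho) (set js)" "tau = map (word_ratio rho) js"
  shows "dust_system tau (infwords (length rho)) (word_dist rho) (\<lambda>t. prepend (js ! t)) 1
    (Min (set rho) ^ Max (length ` set js))"
proof
  let ?m = "length rho"
  have rho: "\<And>t. t < ?m \<Longrightarrow> 0 < rho ! t \<and> rho ! t < 1"
    using contraction_vector_nth[OF assms(1)] .
  have lt: "length tau = length js" using js(3) by simp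
  have js_finwords: "js ! t \<in> finwords ?m" if "t < length js" for t
    using js(2) that unfolding cut_set_def by auto
  show "\<And>t. t < length tau \<Longrightarrow> 0 < tau ! t \<and> tau ! t < 1"
    using contraction_vector_nth[OF assms(2)] .
  show maps_into: "\<And>t x. t < length tau \<Longrightarrow> x \<in> infwords ?m \<Longrightarrow> prepend (js ! t) x \<in> infwords ?m"
    using prepend_in_infwords js_finwords lt by simp
  show "\<And>t x y. t < length tau \<Longrightarrow> x \<in> infwords ?m \<Longrightarrow> y \<in> infwords ?m \<Longrightarrow>
      word_dist rho (prepend (js ! t) x) (prepend (js ! t) y) = tau ! t * word_dist rho x y"
    using word_dist_prepend js(3) lt by simp
  show "\<exists>t<length tau. x \<in> prepend (js ! t) ` infwords ?m" if x: "x \<in> infwords ?m" for x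
  proof -
    have "x \<in> (\<Union>j\<in>set js. cylinder ?m j)" using js(2) x unfolding cut_set_def by simp
    then obtain t where "t < length js" "x \<in> cylinder ?m (js ! t)" by (auto simp: in_set_conv_nth)
    moreover have "(\<lambda>i. x (i + length (js ! t))) \<in> infwords ?m"
      using x unfolding infwords_def by auto
    ultimately have "x \<in> prepend (js ! t) ` infwords ?m"
      using cylinder_prepend[OF x] by (intro image_eqI[where x = "\<lambda>i. x (i + length (js ! t))"]) auto
    then show ?thesis using \<open>t < length js\<close> lt by auto
  qed
  show "\<And>s t x y. s < length tau \<Longrightarrow> t < length tau \<Longrightarrow> s \<noteq> t \<Longrightarrow> x \<in> infwords ?m \<Longrightarrow>
      y \<in> infwords ?m \<Longrightarrow> Min (set rho) ^ Max (length ` set js)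
        \<le> word_dist rho (prepend (js ! s) x) (prepend (js ! t) y)"
    using cut_set_prepend_separated[OF rho js(1,2)] lt by simp
  have "rho \<noteq> []" using assms(1) unfolding contraction_vector_def by simp
  then have "0 < Min (set rho) \<and> Min (set rho) < 1" by (intro ratio_in_set[OF rho] Min_in) auto
  then show "0 < Min (set rho) ^ Max (length ` set js)" by simp
  show "\<And>x y. x \<in> infwords ?m \<Longrightarrow> y \<in> infwords ?m \<Longrightarrow> word_dist rho x y \<le> 1"
    using word_dist_le_1[OF _ rho] .
  show "\<exists>x\<in>infwords ?m. \<forall>k. x \<in> word_map (\<lambda>t. prepend (js ! t)) v k ` infwords ?m"
    if "v \<in> infwords (length tau)" for v
  proof -
    have letters: "js ! v i \<in> finwords ?m" for i using that js_finwords lt unfolding infwords_def by simp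
    show ?thesis
    proof
      show "concat_words js v \<in> infwords ?m" by (rule concat_words_in_infwords) (rule letters)
      show "\<forall>k. concat_words js v \<in> word_map (\<lambda>t. prepend (js ! t)) v k ` infwords ?m"
        by (intro allI concat_words_in_nested_images) (rule letters)
    qed
  qed
  show "\<And>x y. x \<in> infwords ?m \<Longrightarrow> y \<in> infwords ?m \<Longrightarrow> 0 \<le> word_dist rho x y"
    using word_dist_nonneg[OF _ rho] .
  show "\<And>x. x \<in> infwords ?m \<Longrightarrow> word_dist rho x x = 0"
    by (simp add: word_dist_def)
  show "\<And>x y. x \<in> infwords ?m \<Longrightarrow> y \<in> infwords ?m \<Longrightarrow> word_dist rho x y = 0 \<Longrightarrow> x = y"
    using word_dist_eq_0_iff[OF _ rho] by blast
qed

lemma derived_bi_lipschitz_equiv_symbolic: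
  assumes "contraction_vector d rho" "contraction_vector d tau" "derived_from tau rho"
  shows "bi_lipschitz_equiv (infwords (length rho)) (word_dist rho) (infwords (length tau)) (word_dist tau)"
proof -
  obtain js where "distinct js" "cut_set (length rho) (set js)" "tau = map (word_ratio rho) js"
    using assms(3) unfolding derived_from_def by blast
  from derived_dust_system[OF assms(1,2) this] show ?thesis
    by (rule dust_system.bi_lipschitz_equiv_coding)
qed

lemma equiv_steps_bi_lipschitz_equiv_symbolic:
  "(equiv_step d)\<^sup>*\<^sup>* rho tau \<Longrightarrow>
    bi_lipschitz_equiv (infwords (length rho)) (word_dist rho) (infwords (length tau)) (word_dist tau)"
proof (induction rule: rtranclp_induct)
  case base
  show ?case by (rule bi_lipschitz_equiv_refl)
next
  case (step sigma tau)
  from step.hyps(2) have cv: "contraction_vector d sigma" "contraction_vector d tau"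
    and "derived_from tau sigma \<or> derived_from sigma tau"
    unfolding equiv_step_def by auto
  from this(3)
  have "bi_lipschitz_equiv (infwords (length sigma)) (word_dist sigma) (infwords (length tau)) (word_dist tau)"
  proof
    assume "derived_from tau sigma"
    then show ?thesis by (rule derived_bi_lipschitz_equiv_symbolic[OF cv])
  next
    assume "derived_from sigma tau"
    then show ?thesis by (rule bi_lipschitz_equiv_sym[OF derived_bi_lipschitz_equiv_symbolic[OF cv(2,1)]])
  qed
  with step.IH show ?case by (rule bi_lipschitz_equiv_trans)
qed

theorem proposition1p3:
  fixes rho tau :: "real list"
  assumes "contraction_vector DIM('a::euclidean_space) rho"
    and "contraction_vector DIM('a) tau"
    and "equivalent_cv DIM('a) rho tau"
  shows "\<forall>E \<in> (dustlike rho :: 'a set set). \<forall>F \<in> (dustlike tau :: 'a set set).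
           lipschitz_equivalent E F"
proof (intro ballI)
  fix E F :: "'a set"
  assume "E \<in> dustlike rho" "F \<in> dustlike tau"
  have "bi_lipschitz_equiv E dist (infwords (length rho)) (word_dist rho)"
    by (rule dustlike_bi_lipschitz_equiv_symbolic[OF assms(1) \<open>E \<in> dustlike rho\<close>])
  moreover have "bi_lipschitz_equiv (infwords (length rho)) (word_dist rho) (infwords (length tau)) (word_dist tau)"
    using assms(3) unfolding equivalent_cv_def by (blast intro: equiv_steps_bi_lipschitz_equiv_symbolic)
  moreover have "bi_lipschitz_equiv (infwords (length tau)) (word_dist tau) F dist"
    by (rule bi_lipschitz_equiv_sym[OF dustlike_bi_lipschitz_equiv_symbolic[OF assms(2) \<open>F \<in> dustlike tau\<close>]])
  ultimately show "lipschitz_equivalent E F"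
    unfolding lipschitz_equivalent_iff_bi_lipschitz_equiv by (blast intro: bi_lipschitz_equiv_trans)
qed

end
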